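(* Let $\theta>0$ and $h>0$, and let $\mu=\frac12(\delta_{-1}+\delta_{+1})$ on $\{-1,+1\}$. For a function $q:[0,2\pi)\times\{-1,+1\}\to\mathbb{R}$ define $r_q\ge 0$ and $\Psi_q\in[0,2\pi)$ by \[ r_q e^{i\Psi_q}=\int_{\{-1,+1\}}\int_0^{2\pi} e^{ix}\,q(x,\eta)\,dx\,\mu(d\eta), \] and the operator $L_q$ acting on $f:[0,2\pi)\times\{-1,+1\}\to\mathbb{R}$ by \[ L_q f(x,\eta)=\frac12\frac{\partial^2 f}{\partial x^2}(x,\eta)-\frac{\partial}{\partial x}\Big\{\big[\theta r_q\sin(\Psi_q-x)-h\eta\sin x\big]f(x,\eta)\Big\}. \] Let $q:[0,2\pi)\times\{-1,+1\}\to\mathbb{R}$ be such that $q(x,\cdot)$ is measurable and $q(\cdot,\eta)$ is a probability density on $[0,2\pi)$ (the circle, with periodic boundary conditions). Then $q$ is a stationary solution of the McKean–Vlasov equation $\partial_t q_t=L_{q_t}q_t$, i.e. $L_q q\equiv 0$, if and only if it is of the form \[ q(x,\eta)=[Z(\eta)]^{-1}\exp\{2\theta r\cos(\Psi-x)+2h\eta\cos x\}, \] where $Z(\eta)$ is a normalizing factor and $(r,\Psi)$ satisfies the self-consistency relation \[ r e^{i\Psi}=\int_{\{-1,+1\}}\int_0^{2\pi}e^{ix}\,q(x,\eta)\,dx\,\mu(d\eta). \]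
   Context: The torus $[0,2\pi)$ is identified with the circle; functions on it are $2\pi$-periodic. $\mu$ is the law of the dichotomic random field $\eta$, uniform on $\{-1,+1\}$; $\theta>0$ is the coupling strength and $h>0$ the field intensity. *)

theory Defs
  imports "HOL-Analysis.Analysis"
begin

(* Functions on the torus [0,2pi) x {-1,+1} are represented as
   q :: real => real => real, q x eta, 2pi-periodic in x; eta ranges over {-1,1}. *)

definition mu_int :: "(real \<Rightarrow> 'a::real_vector) \<Rightarrow> 'a" where
  "mu_int F = (1/2) *\<^sub>R (F (-1) + F 1)"

definition order_param :: "(real \<Rightarrow> real \<Rightarrow> real) \<Rightarrow> complex" where
  "order_param q = mu_int (\<lambda>\<eta>. integral {0..2*pi} (\<lambda>x. exp (\<i> * complex_of_real x) * complex_of_real (q x \<eta>)))"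

definition r_of :: "(real \<Rightarrow> real \<Rightarrow> real) \<Rightarrow> real" where
  "r_of q = cmod (order_param q)"

text \<open>Psi_q in [0,2pi) with r_q e^{i Psi_q} = order_param q (Psi_q = 0 if order_param q = 0).\<close>
definition Psi_of :: "(real \<Rightarrow> real \<Rightarrow> real) \<Rightarrow> real" where
  "Psi_of q = (if Arg (order_param q) < 0 then Arg (order_param q) + 2*pi else Arg (order_param q))"

definition L_op :: "real \<Rightarrow> real \<Rightarrow> (real \<Rightarrow> real \<Rightarrow> real) \<Rightarrow> (real \<Rightarrow> real \<Rightarrow> real) \<Rightarrow> real \<Rightarrow> real \<Rightarrow> real" where
  "L_op \<theta> h q f x \<eta> =
     (1/2) * deriv (deriv (\<lambda>y. f y \<eta>)) x
     - deriv (\<lambda>y. (\<theta> * r_of q * sin (Psi_of q - y) - h * \<eta> * sin y) * f y \<eta>) x"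

end

theory Submission
  imports Defs
begin

text \<open>The stationary equation \<open>g''/2 - (F g)' = 0\<close> says that the flux \<open>J = g'/2 - F g\<close>
  is constant. Writing \<open>F = U'/2\<close>, the function \<open>g exp(-U)\<close> has derivative \<open>2 J exp(-U)\<close>,
  which has constant sign, so periodicity forces \<open>J = 0\<close>: \<open>g\<close> is a multiple of \<open>exp U\<close>, and
  normalisation fixes the multiple. For the McKean--Vlasov operator
  \<open>U = 2\<theta>r cos(\<Psi> - x) + 2h\<eta> cos x\<close>, and the drift sees the mean field only through
  \<open>r sin(\<Psi> - x)\<close>, which is the same for every polar form \<open>r exp(i\<Psi>)\<close> of the order parameter.\<close>

lemma periodic_solution_exp_multiple:
  fixes g U u :: "real \<Rightarrow> real" and c T :: real
  assumes "T > 0"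
    and dU: "\<And>x. (U has_real_derivative u x) (at x)"
    and dg: "\<And>x. (g has_real_derivative u x * g x + c) (at x)"
    and pU: "U T = U 0" and pg: "g T = g 0"
  shows "\<exists>K. \<forall>x. g x = K * exp (U x)"
proof -
  define W where "W = (\<lambda>y. g y * exp (- U y))"
  have dW: "(W has_real_derivative c * exp (- U x)) (at x)" for x
  proof -
    have "(W has_real_derivative (u x * g x + c) * exp (- U x) + g x * (exp (- U x) * - u x)) (at x)"
      unfolding W_def by (auto intro!: derivative_eq_intros dg dU)
    then show ?thesis by (simp add: algebra_simps)
  qed
  obtain z where "W T - W 0 = (T - 0) * (c * exp (- U z))"
    using MVT2[of 0 T W "\<lambda>x. c * exp (- U x)"] dW \<open>T > 0\<close> by auto
  moreover have "W T = W 0" unfolding W_def using pg pU by simp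
  ultimately have "c = 0" using \<open>T > 0\<close> by simp
  then have "W x = W 0" for x using dW DERIV_isconst_all by fastforce
  then have "g x = W 0 * exp (U x)" for x
    unfolding W_def by (simp add: exp_minus field_simps)
  then show ?thesis by blast
qed

lemma stationary_imp_constant_flux:
  fixes g F :: "real \<Rightarrow> real"
  assumes dF: "\<And>x. F differentiable (at x)"
    and dg: "\<And>x. g differentiable (at x)" and ddg: "\<And>x. deriv g differentiable (at x)"
    and stationary: "\<And>x. 1/2 * deriv (deriv g) x - deriv (\<lambda>y. F y * g y) x = 0"
  shows "\<exists>c. \<forall>x. (g has_real_derivative 2 * F x * g x + c) (at x)"
proof -
  have g': "(g has_real_derivative deriv g x) (at x)"
    and g'': "(deriv g has_real_derivative deriv (deriv g) x) (at x)"
    and F': "(F has_real_derivative deriv F x) (at x)" for x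
    using dg ddg dF DERIV_deriv_iff_real_differentiable by blast+
  define flux where "flux = (\<lambda>y. 1/2 * deriv g y - F y * g y)"
  have "(flux has_real_derivative 0) (at x)" for x
  proof -
    have Fg': "((\<lambda>y. F y * g y) has_real_derivative deriv F x * g x + F x * deriv g x) (at x)"
      by (auto intro!: derivative_eq_intros F' g')
    have "(flux has_real_derivative 1/2 * deriv (deriv g) x - (deriv F x * g x + F x * deriv g x)) (at x)"
      unfolding flux_def by (intro DERIV_diff DERIV_cmult g'' Fg')
    moreover have "1/2 * deriv (deriv g) x - (deriv F x * g x + F x * deriv g x) = 0"
      using stationary[of x] DERIV_imp_deriv[OF Fg'] by simp
    ultimately show ?thesis by (simp only:)
  qed
  then have "flux x = flux 0" for x using DERIV_isconst_all by blast
  then have "deriv g x = 2 * F x * g x + 2 * flux 0" for x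
    unfolding flux_def by (simp add: field_simps)
  then show ?thesis using g' by metis
qed

lemma gibbs_stationary:
  fixes F U :: "real \<Rightarrow> real" and Z :: real
  assumes dU: "\<And>x. (U has_real_derivative 2 * F x) (at x)"
    and dF: "\<And>x. F differentiable (at x)"
  shows "1/2 * deriv (deriv (\<lambda>y. exp (U y) / Z)) x - deriv (\<lambda>y. F y * (exp (U y) / Z)) x = 0"
proof -
  define g where "g = (\<lambda>y. exp (U y) / Z)"
  have F': "(F has_real_derivative deriv F x) (at x)" for x
    using dF DERIV_deriv_iff_real_differentiable by blast
  have g': "(g has_real_derivative 2 * F y * g y) (at y)" for y
  proof -
    have "((\<lambda>y. exp (U y) * (1/Z)) has_real_derivative exp (U y) * (2 * F y) * (1/Z)) (at y)"
      by (intro DERIV_cmult_right DERIV_fun_exp dU)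
    then show ?thesis unfolding g_def by (simp add: algebra_simps)
  qed
  then have "deriv g = (\<lambda>y. 2 * (F y * g y))"
    using DERIV_imp_deriv[OF g'] by (simp add: fun_eq_iff)
  moreover have Fg': "((\<lambda>y. F y * g y) has_real_derivative deriv F x * g x + F x * (2 * F x * g x)) (at x)"
    by (auto intro!: derivative_eq_intros F' g')
  ultimately have "deriv (deriv g) x = 2 * (deriv F x * g x + F x * (2 * F x * g x))"
    using DERIV_cmult[OF Fg', of 2] DERIV_imp_deriv by simp
  with DERIV_imp_deriv[OF Fg'] show ?thesis unfolding g_def by simp
qed

lemma periodic_stationary_density_iff_gibbs:
  fixes g F U :: "real \<Rightarrow> real" and T :: real
  assumes "T > 0"
    and dU: "\<And>x. (U has_real_derivative 2 * F x) (at x)"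
    and dF: "\<And>x. F differentiable (at x)"
    and pU: "U T = U 0" and pg: "g T = g 0"
    and dg: "\<And>x. g differentiable (at x)" and ddg: "\<And>x. deriv g differentiable (at x)"
    and normalised: "integral {0..T} g = 1"
  shows "(\<forall>x. 1/2 * deriv (deriv g) x - deriv (\<lambda>y. F y * g y) x = 0) \<longleftrightarrow>
         (\<forall>x. g x = exp (U x) / integral {0..T} (\<lambda>y. exp (U y)))"
proof
  assume "\<forall>x. 1/2 * deriv (deriv g) x - deriv (\<lambda>y. F y * g y) x = 0"
  then obtain c where "\<And>x. (g has_real_derivative 2 * F x * g x + c) (at x)"
    using stationary_imp_constant_flux dF dg ddg by blast
  then obtain K where K: "\<And>x. g x = K * exp (U x)"
    using periodic_solution_exp_multiple[OF \<open>T > 0\<close> dU _ pU pg] by blast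
  have "K * integral {0..T} (\<lambda>y. exp (U y)) = 1"
    using normalised unfolding K by simp
  then have "K = 1 / integral {0..T} (\<lambda>y. exp (U y))"
    by (metis mult_zero_right nonzero_eq_divide_eq zero_neq_one)
  then show "\<forall>x. g x = exp (U x) / integral {0..T} (\<lambda>y. exp (U y))"
    using K by simp
next
  assume "\<forall>x. g x = exp (U x) / integral {0..T} (\<lambda>y. exp (U y))"
  then have "g = (\<lambda>x. exp (U x) / integral {0..T} (\<lambda>y. exp (U y)))" by blast
  then show "\<forall>x. 1/2 * deriv (deriv g) x - deriv (\<lambda>y. F y * g y) x = 0"
    using gibbs_stationary[OF dU dF] by blast
qed

lemma mean_field_stationary_iff_gibbs:
  fixes g :: "real \<Rightarrow> real" and \<theta> h r \<Psi> \<eta> :: real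
  assumes pg: "g (2*pi) = g 0"
    and dg: "\<And>x. g differentiable (at x)" and ddg: "\<And>x. deriv g differentiable (at x)"
    and normalised: "integral {0..2*pi} g = 1"
  shows "(\<forall>x. 1/2 * deriv (deriv g) x - deriv (\<lambda>y. (\<theta>*r* sin (\<Psi> - y) - h*\<eta>* sin y) * g y) x = 0) \<longleftrightarrow>
         (\<forall>x. g x = exp (2*\<theta>*r*cos (\<Psi> - x) + 2*h*\<eta>*cos x)
                 / integral {0..2*pi} (\<lambda>y. exp (2*\<theta>*r*cos (\<Psi> - y) + 2*h*\<eta>*cos y)))"
proof (rule periodic_stationary_density_iff_gibbs[OF _ _ _ _ pg dg ddg normalised])
  show "2*pi > 0" by simp
  show "((\<lambda>y. 2*\<theta>*r*cos (\<Psi> - y) + 2*h*\<eta>*cos y) has_real_derivative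
          2 * (\<theta>*r* sin (\<Psi> - x) - h*\<eta>* sin x)) (at x)" for x
    by (auto intro!: derivative_eq_intros simp: algebra_simps)
  show "(\<lambda>y. \<theta>*r* sin (\<Psi> - y) - h*\<eta>* sin y) differentiable (at x)" for x
    unfolding real_differentiable_def by (intro exI derivative_eq_intros) auto
  show "2*\<theta>*r*cos (\<Psi> - 2*pi) + 2*h*\<eta>*cos (2*pi) = 2*\<theta>*r*cos (\<Psi> - 0) + 2*h*\<eta>*cos 0"
    by (simp add: cos_diff)
qed

lemma order_param_polar:
  "complex_of_real (r_of q) * exp (\<i> * complex_of_real (Psi_of q)) = order_param q"
proof (cases "order_param q = 0")
  case True
  then show ?thesis by (simp add: r_of_def)
next
  case False
  have "exp (\<i> * complex_of_real (Psi_of q)) = exp (\<i> * complex_of_real (Arg (order_param q)))"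
    unfolding Psi_of_def using exp_two_pi_i by (simp add: distrib_left exp_add mult.commute)
  then show ?thesis
    unfolding r_of_def using Arg_eq[OF False] by simp
qed

lemma Psi_of_range: "Psi_of q \<in> {0..<2*pi}"
  using Arg_bounded[of "order_param q"] unfolding Psi_of_def by auto

lemma polar_forms_same_sin:
  fixes r s a b y :: real
  assumes "complex_of_real r * exp (\<i> * complex_of_real a) = complex_of_real s * exp (\<i> * complex_of_real b)"
  shows "r * sin (a - y) = s * sin (b - y)"
proof -
  have Im_rotated: "Im (complex_of_real t * exp (\<i> * complex_of_real c) * exp (- (\<i> * complex_of_real y)))
      = t * sin (c - y)" for t c
  proof -
    have rotate: "complex_of_real t * exp (\<i> * complex_of_real c) * exp (- (\<i> * complex_of_real y))
        = complex_of_real t * exp (\<i> * complex_of_real (c - y))"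
      by (simp add: algebra_simps flip: exp_add)
    show ?thesis unfolding rotate by (simp add: Im_exp del: of_real_diff)
  qed
  show ?thesis using Im_rotated[of r a] Im_rotated[of s b] assms by simp
qed

theorem proposition1:
  fixes \<theta> h :: real and q :: "real \<Rightarrow> real \<Rightarrow> real"
  assumes "\<theta> > 0" and "h > 0"
    and periodic: "\<forall>\<eta>\<in>{-1,1}. \<forall>x. q (x + 2*pi) \<eta> = q x \<eta>"
    and smooth: "\<forall>\<eta>\<in>{-1,1}. \<forall>x. (\<lambda>y. q y \<eta>) differentiable (at x)
                   \<and> deriv (\<lambda>y. q y \<eta>) differentiable (at x)"
    and density: "\<forall>\<eta>\<in>{-1,1}. (\<forall>x. q x \<eta> \<ge> 0) \<and> (\<lambda>x. q x \<eta>) integrable_on {0..2*pi}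
                   \<and> integral {0..2*pi} (\<lambda>x. q x \<eta>) = 1"
  shows "(\<forall>\<eta>\<in>{-1,1}. \<forall>x. L_op \<theta> h q q x \<eta> = 0) \<longleftrightarrow>
         (\<exists>r \<Psi>. r \<ge> 0 \<and> \<Psi> \<in> {0..<2*pi} \<and>
            (\<forall>\<eta>\<in>{-1,1}. \<forall>x. q x \<eta> =
                exp (2*\<theta>*r*cos (\<Psi> - x) + 2*h*\<eta>*cos x)
                / integral {0..2*pi} (\<lambda>y. exp (2*\<theta>*r*cos (\<Psi> - y) + 2*h*\<eta>*cos y))) \<and>
            complex_of_real r * exp (\<i> * complex_of_real \<Psi>) = order_param q)"
proof -
  have stationary_iff_gibbs:
    "(\<forall>\<eta>\<in>{-1,1}. \<forall>x. L_op \<theta> h q q x \<eta> = 0) \<longleftrightarrow>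
     (\<forall>\<eta>\<in>{-1,1}. \<forall>x. q x \<eta> = exp (2*\<theta>*r*cos (\<Psi> - x) + 2*h*\<eta>*cos x)
                / integral {0..2*pi} (\<lambda>y. exp (2*\<theta>*r*cos (\<Psi> - y) + 2*h*\<eta>*cos y)))"
    if polar: "complex_of_real r * exp (\<i> * complex_of_real \<Psi>) = order_param q" for r \<Psi>
  proof -
    have "r_of q * sin (Psi_of q - y) = r * sin (\<Psi> - y)" for y
      using order_param_polar polar by (intro polar_forms_same_sin) simp
    then have "L_op \<theta> h q q x \<eta> = 1/2 * deriv (deriv (\<lambda>y. q y \<eta>)) x
                 - deriv (\<lambda>y. (\<theta>*r* sin (\<Psi> - y) - h*\<eta>* sin y) * q y \<eta>) x" for x \<eta>
      unfolding L_op_def by (simp add: mult.assoc)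
    moreover have "(\<forall>x. 1/2 * deriv (deriv (\<lambda>y. q y \<eta>)) x
                 - deriv (\<lambda>y. (\<theta>*r* sin (\<Psi> - y) - h*\<eta>* sin y) * q y \<eta>) x = 0) \<longleftrightarrow>
          (\<forall>x. q x \<eta> = exp (2*\<theta>*r*cos (\<Psi> - x) + 2*h*\<eta>*cos x)
                / integral {0..2*pi} (\<lambda>y. exp (2*\<theta>*r*cos (\<Psi> - y) + 2*h*\<eta>*cos y)))"
      if \<eta>: "\<eta> \<in> {-1,1}" for \<eta>
    proof (rule mean_field_stationary_iff_gibbs)
      show "q (2*pi) \<eta> = q 0 \<eta>" using periodic \<eta> by (metis add_0)
    qed (use smooth density \<eta> in auto)
    ultimately show ?thesis by simp
  qed
  have "r_of q \<ge> 0" by (simp add: r_of_def)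
  then show ?thesis
    using stationary_iff_gibbs[OF order_param_polar] stationary_iff_gibbs Psi_of_range order_param_polar
    by blast
qed

end
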